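(* Let $k$ be a field of characteristic $\neq2$, $f\in k[X]$ separable of degree $6$ with roots $\Omega\subset\bar k$, $\bar A=\bar k[X]/(f)$, and $\delta\in\bar A^*$. Let $\Lambda$ be the set of the $32$ lines $L_\varepsilon$, for $\varepsilon\in\bar A$ with $\varepsilon^2=\delta$, where $L_\varepsilon$ corresponds to the subspace $\{\varepsilon^{-1}(sX+t):s,t\in\bar k\}$ of $\bar A$; note $L_\varepsilon=L_{-\varepsilon}$. Let $L,L'\in\Lambda$ be different lines of the same parity. Then $L$ and $L'$ do not intersect, and there are exactly two lines $M,M'\in\Lambda$ of the opposite parity that intersect both $L$ and $L'$. Moreover there are $\omega,\psi\in\Omega$ such that $\{L,L',M,M'\}$ is an orbit of $\Lambda$ under the group $\Phi_{\omega\psi}$.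
   Context: For $I\subseteq\Omega$ let $\mu_I\in\bar A$ be the element with $\varphi_\theta(\mu_I)=-1$ for $\theta\in I$ and $=1$ otherwise, where $\varphi_\theta$ is evaluation at $X=\theta$. Write $\mu_\omega=\mu_{\{\omega\}}$. Multiplication by $\mu_I$ maps $L_\varepsilon$ to $L_{\varepsilon\mu_I^{-1}}$. Since $\mu_{\Omega\setminus I}=-\mu_I$, it acts on $\Lambda$ simply transitively modulo $\pm1$. Two lines $L,L'\in\Lambda$ have the same parity if for the subset $I$ with $\mu_IL=L'$ the cardinality $\#I$ is even; this is independent of replacing $I$ by $\Omega\setminus I$. Otherwise they have opposite parity. $\Phi_{\omega\psi}$ is the group of automorphisms generated by multiplication by $\mu_\omega$ and $\mu_\psi$. *)

theory Defs
  imports "HOL-Computational_Algebra.Polynomial"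
begin

text \<open>The field k is modelled as a subfield of an algebraically closed field 'a
  (playing the role of the algebraic closure).  The algebra
  A-bar = k-bar[X]/(f) is modelled by polynomials over 'a reduced modulo f.\<close>

definition subfield :: "'a::field set \<Rightarrow> bool" where
  "subfield k \<longleftrightarrow> 0 \<in> k \<and> 1 \<in> k \<and>
     (\<forall>x\<in>k. \<forall>y\<in>k. x + y \<in> k \<and> x * y \<in> k) \<and>
     (\<forall>x\<in>k. - x \<in> k \<and> inverse x \<in> k)"

definition separable_poly :: "'a::field poly \<Rightarrow> bool" where
  "separable_poly f \<longleftrightarrow> coprime f (pderiv f)"

definition roots_of :: "'a::field poly \<Rightarrow> 'a set" where
  "roots_of f = {x. poly f x = 0}"

definition Abar :: "'a::field poly \<Rightarrow> 'a poly set" where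
  "Abar f = {p. p mod f = p}"

definition Abar_unit :: "'a::field poly \<Rightarrow> 'a poly \<Rightarrow> bool" where
  "Abar_unit f d \<longleftrightarrow> (\<exists>e. (d * e) mod f = 1)"

definition line_of :: "'a::field poly \<Rightarrow> 'a poly \<Rightarrow> 'a poly set" where
  "line_of f \<epsilon> = {q \<in> Abar f. \<exists>s t. (\<epsilon> * q) mod f = [:t, s:]}"

definition Lambda :: "'a::field poly \<Rightarrow> 'a poly \<Rightarrow> 'a poly set set" where
  "Lambda f \<delta> = {line_of f \<epsilon> | \<epsilon>. \<epsilon> \<in> Abar f \<and> (\<epsilon> * \<epsilon>) mod f = \<delta> mod f}"

text \<open>Two lines (2-dim subspaces) intersect in projective space iff they share a
  nonzero vector.\<close>
definition lines_intersect :: "'a::field poly set \<Rightarrow> 'a poly set \<Rightarrow> bool" where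
  "lines_intersect L L' \<longleftrightarrow> (\<exists>q. q \<noteq> 0 \<and> q \<in> L \<and> q \<in> L')"

definition mu :: "'a::field poly \<Rightarrow> 'a set \<Rightarrow> 'a poly" where
  "mu f I = (THE p. p \<in> Abar f \<and>
      (\<forall>\<theta>\<in>roots_of f. poly p \<theta> = (if \<theta> \<in> I then -1 else 1)))"

definition mult_line :: "'a::field poly \<Rightarrow> 'a poly \<Rightarrow> 'a poly set \<Rightarrow> 'a poly set" where
  "mult_line f m L = (\<lambda>q. (m * q) mod f) ` L"

definition same_parity :: "'a::field poly \<Rightarrow> 'a poly set \<Rightarrow> 'a poly set \<Rightarrow> bool" where
  "same_parity f L L' \<longleftrightarrow>
     (\<exists>I. I \<subseteq> roots_of f \<and> mult_line f (mu f I) L = L' \<and> even (card I))"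

definition opposite_parity :: "'a::field poly \<Rightarrow> 'a poly set \<Rightarrow> 'a poly set \<Rightarrow> bool" where
  "opposite_parity f L L' \<longleftrightarrow> \<not> same_parity f L L'"

text \<open>Orbit of L under Phi_{omega psi}, the group generated by multiplication by
  mu_omega and mu_psi (commuting elements of finite order, so the group consists
  of multiplications by mu_omega^a * mu_psi^b).\<close>
definition Phi_orbit :: "'a::field poly \<Rightarrow> 'a \<Rightarrow> 'a \<Rightarrow> 'a poly set \<Rightarrow> 'a poly set set" where
  "Phi_orbit f \<omega> \<psi> L =
     {mult_line f ((mu f {\<omega>}) ^ a * (mu f {\<psi>}) ^ b) L | a b :: nat. True}"

end

theory Submission
  imports Defs
begin

text \<open>Since f has six simple roots, evaluation at \<Omega> identifies A-bar with the functions
  \<Omega> \<rightarrow> k-bar.  Fixing one square root \<epsilon> of \<delta>, every other one is \<mu>_K \<epsilon> for some K \<subseteq> \<Omega>,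
  so \<Lambda> consists of the lines \<mu>_K L_\<epsilon>, and \<mu>_K L_\<epsilon> = \<mu>_(\<Omega> - K) L_\<epsilon>.
  A common point q of L_e and \<mu>_D L_e gives two affine functions s \<theta> + t of \<theta> \<in> \<Omega>,
  namely e q and \<mu>_D e q, which agree off D and are opposite on D.  If D and its complement
  both contain two roots, both functions vanish and q = 0; if D = {w}, the element (X - w)/e
  lies on both lines.  So two lines of \<Lambda> meet exactly when they differ by a single \<mu>_w.
  Writing L' = \<mu>_{\<omega>,\<psi>} L, the lines of opposite parity meeting L and L' are \<mu>_\<omega> L and
  \<mu>_\<psi> L, and these four lines form the \<Phi>_\<omega>\<psi>-orbit of L.\<close>

lemma card_ge_2_obtain:
  assumes "2 \<le> card X"
  obtains a b where "a \<in> X" "b \<in> X" "a \<noteq> b"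
proof -
  obtain a B where "X = insert a B" "a \<notin> B" "1 \<le> card B"
    using assms card_le_Suc_iff[of 1 X] by auto
  moreover from \<open>1 \<le> card B\<close> obtain b where "b \<in> B"
    by (metis card.empty ex_in_conv not_one_le_zero)
  ultimately show ?thesis using that by blast
qed

lemma affine_eq_at_two_points:
  fixes s t u v a b :: "'a::field"
  assumes "a \<noteq> b" "s * a + t = u * a + v" "s * b + t = u * b + v"
  shows "s = u \<and> t = v"
proof -
  have "(s - u) * (a - b) = (s * a + t) - (s * b + t) - ((u * a + v) - (u * b + v))"
    by (simp add: algebra_simps)
  also have "\<dots> = 0"
    using assms(2,3) by simp
  finally have "(s - u) * (a - b) = 0" .
  then have "s = u" using assms(1) by simp
  then show ?thesis using assms(2) by simp
qed

lemma separable_no_double_root: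
  assumes "separable_poly f"
  shows "\<not> [:-x, 1:] ^ 2 dvd f"
proof
  assume "[:-x, 1:] ^ 2 dvd f"
  then obtain g where "f = [:-x, 1:] ^ 2 * g" ..
  then have f: "f = [:-x, 1:] * ([:-x, 1:] * g)"
    by (simp only: power2_eq_square mult.assoc)
  have "[:-x, 1:] dvd pderiv f"
    unfolding f pderiv_mult by (intro dvd_add dvd_mult2 dvd_triv_left)
  moreover have "[:-x, 1:] dvd f"
    by (subst f) (rule dvd_triv_left)
  ultimately have "is_unit [:-x, 1:]"
    using assms coprime_common_divisor unfolding separable_poly_def by blast
  then show False
    by (simp add: is_unit_iff_degree)
qed

lemma card_roots_of_separable:
  fixes f :: "'a::alg_closed_field poly"
  assumes "f \<noteq> 0" "separable_poly f"
  shows "card (roots_of f) = degree f"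
proof -
  obtain A where A: "size A = degree f" "f = smult (lead_coeff f) (\<Prod>x\<in>#A. [:-x, 1:])"
    using alg_closed_imp_factorization[OF assms(1)] by blast
  have simple: "count A x \<le> 1" for x
  proof (rule ccontr)
    assume "\<not> count A x \<le> 1"
    then have "image_mset (\<lambda>x. [:-x, 1:]) {#x, x#} \<subseteq># image_mset (\<lambda>x. [:-x, 1:]) A"
      by (intro image_mset_subseteq_mono) (simp add: subseteq_mset_def)
    then have "[:-x, 1:] ^ 2 dvd (\<Prod>x\<in>#A. [:-x, 1:])"
      by (auto dest!: prod_mset_subset_imp_dvd simp: power2_eq_square)
    then have "[:-x, 1:] ^ 2 dvd f"
      by (subst A(2)) (rule dvd_smult)
    then show False
      using separable_no_double_root[OF assms(2)] by blast
  qed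
  have "set_mset A \<subseteq> roots_of f"
  proof
    fix x assume "x \<in># A"
    then obtain B where "A = add_mset x B"
      by (metis multi_member_split)
    then have "poly f x = 0"
      by (subst A(2)) simp
    then show "x \<in> roots_of f"
      by (simp add: roots_of_def)
  qed
  moreover have "finite (roots_of f)"
    unfolding roots_of_def using assms(1) poly_roots_finite by blast
  moreover have "size A \<le> card (set_mset A)"
  proof -
    have "size A = (\<Sum>x\<in>set_mset A. count A x)"
      by (simp add: size_multiset_overloaded_eq)
    also have "\<dots> \<le> card (set_mset A)"
      using sum_bounded_above[of "set_mset A" "count A" 1] simple by simp
    finally show ?thesis .
  qed
  ultimately have "degree f \<le> card (roots_of f)"
    using A(1) card_mono[of "roots_of f" "set_mset A"] by linarith
  moreover have "card (roots_of f) \<le> degree f"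
    using card_poly_roots_bound[OF assms(1)] by (simp add: roots_of_def)
  ultimately show ?thesis by simp
qed

locale split_separable_poly =
  fixes f :: "'a::field poly"
  assumes nonzero: "f \<noteq> 0"
    and degree_eq_card_roots: "degree f = card (roots_of f)"
begin

abbreviation \<Omega> :: "'a set" where "\<Omega> \<equiv> roots_of f"

lemma finite_roots: "finite \<Omega>"
  unfolding roots_of_def using nonzero poly_roots_finite by blast

lemma mod_in_Abar: "p mod f \<in> Abar f"
  by (simp add: Abar_def)

lemma poly_mod_at_root: "\<theta> \<in> \<Omega> \<Longrightarrow> poly (p mod f) \<theta> = poly p \<theta>"
  by (rule poly_mod) (simp add: roots_of_def)

lemma Abar_eqI:
  assumes "p \<in> Abar f" "q \<in> Abar f" "\<And>\<theta>. \<theta> \<in> \<Omega> \<Longrightarrow> poly p \<theta> = poly q \<theta>"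
  shows "p = q"
proof (rule ccontr)
  assume "p \<noteq> q"
  then have r: "p - q \<noteq> 0" by simp
  have "(p - q) mod f = p - q"
    using assms(1,2) by (simp add: poly_mod_diff_left Abar_def)
  then have "degree (p - q) < card \<Omega>"
    using degree_mod_less'[OF nonzero, of "p - q"] r degree_eq_card_roots by simp
  also have "card \<Omega> \<le> card {x. poly (p - q) x = 0}"
    using assms(3) by (intro card_mono poly_roots_finite[OF r]) auto
  also have "\<dots> \<le> degree (p - q)"
    by (rule card_poly_roots_bound[OF r])
  finally show False by simp
qed

lemma mod_eq_iff_eq_on_roots: "p mod f = q mod f \<longleftrightarrow> (\<forall>\<theta>\<in>\<Omega>. poly p \<theta> = poly q \<theta>)"
proof
  assume "p mod f = q mod f"
  then show "\<forall>\<theta>\<in>\<Omega>. poly p \<theta> = poly q \<theta>"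
    by (metis poly_mod_at_root)
next
  assume "\<forall>\<theta>\<in>\<Omega>. poly p \<theta> = poly q \<theta>"
  then show "p mod f = q mod f"
    by (intro Abar_eqI mod_in_Abar) (simp add: poly_mod_at_root)
qed

lemma Abar_interpolation: "\<exists>p\<in>Abar f. \<forall>\<theta>\<in>\<Omega>. poly p \<theta> = g \<theta>"
proof -
  define P where
    "P = (\<Sum>x\<in>\<Omega>. smult (g x / (\<Prod>y\<in>\<Omega>-{x}. x - y)) (\<Prod>y\<in>\<Omega>-{x}. [:-y, 1:]))"
  have "poly P z = g z" if z: "z \<in> \<Omega>" for z
  proof -
    have vanish: "(\<Prod>y\<in>\<Omega>-{x}. z - y) = 0" if "x \<in> \<Omega> - {z}" for x
      using that z finite_roots by (subst prod_zero_iff) auto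
    have "poly P z = (\<Sum>x\<in>\<Omega>. g x / (\<Prod>y\<in>\<Omega>-{x}. x - y) * (\<Prod>y\<in>\<Omega>-{x}. z - y))"
      by (simp add: P_def poly_sum poly_prod)
    also have "\<dots> = g z / (\<Prod>y\<in>\<Omega>-{z}. z - y) * (\<Prod>y\<in>\<Omega>-{z}. z - y)"
      using vanish by (subst sum.remove[OF finite_roots z]) simp
    also have "\<dots> = g z"
      using finite_roots by (simp add: prod_zero_iff)
    finally show ?thesis .
  qed
  then show ?thesis
    by (intro bexI[of _ "P mod f"] mod_in_Abar) (simp add: poly_mod_at_root)
qed

lemma poly_mu_at_root:
  assumes "\<theta> \<in> \<Omega>"
  shows "poly (mu f I) \<theta> = (if \<theta> \<in> I then -1 else 1)"
proof -
  obtain p where p: "p \<in> Abar f" "\<forall>\<theta>\<in>\<Omega>. poly p \<theta> = (if \<theta> \<in> I then -1 else 1)"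
    using Abar_interpolation[of "\<lambda>\<theta>. if \<theta> \<in> I then -1 else 1"] by blast
  then have "\<exists>!p. p \<in> Abar f \<and> (\<forall>\<theta>\<in>\<Omega>. poly p \<theta> = (if \<theta> \<in> I then -1 else 1))"
    by (intro ex1I[of _ p]) (auto intro: Abar_eqI)
  then have "\<forall>\<theta>\<in>\<Omega>. poly (mu f I) \<theta> = (if \<theta> \<in> I then -1 else 1)"
    unfolding mu_def by (rule theI'[THEN conjunct2])
  then show ?thesis
    using assms by blast
qed

lemma mult_line_cong:
  assumes "\<And>\<theta>. \<theta> \<in> \<Omega> \<Longrightarrow> poly m \<theta> = poly m' \<theta>"
  shows "mult_line f m L = mult_line f m' L"
proof -
  have "(m * q) mod f = (m' * q) mod f" for q
    using assms by (simp add: mod_eq_iff_eq_on_roots)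
  then show ?thesis
    unfolding mult_line_def by simp
qed

lemma Abar_unit_nonzero_at_root:
  assumes "Abar_unit f d" "\<theta> \<in> \<Omega>"
  shows "poly d \<theta> \<noteq> 0"
proof -
  obtain u where "(d * u) mod f = 1"
    using assms(1) unfolding Abar_unit_def by blast
  then have "poly d \<theta> * poly u \<theta> = 1"
    using poly_mod_at_root[OF assms(2), of "d * u"] by simp
  then show ?thesis by auto
qed

end

locale Abar_lines = split_separable_poly +
  assumes two_nonzero: "(2::'a) \<noteq> 0"
    and three_le_card_roots: "3 \<le> card (roots_of f)"
begin

lemma neg_eq_self_iff: "- x = x \<longleftrightarrow> x = (0::'a)"
proof
  assume "- x = x"
  then have "2 * x = 0"
    by (metis add.left_inverse mult_2)
  then show "x = 0"
    using two_nonzero by simp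
qed simp

lemma line_of_conv_roots:
  "line_of f e = {q \<in> Abar f. \<exists>s t. \<forall>\<theta>\<in>\<Omega>. poly e \<theta> * poly q \<theta> = s * \<theta> + t}"
proof -
  have "degree [:t, s:] < degree f" for s t :: 'a
    using three_le_card_roots degree_eq_card_roots by simp
  then have "(e * q) mod f = [:t, s:] \<longleftrightarrow> (e * q) mod f = [:t, s:] mod f" for q s t
    by (metis mod_poly_less)
  then show ?thesis
    unfolding line_of_def by (simp add: mod_eq_iff_eq_on_roots algebra_simps)
qed

lemma line_of_scale:
  assumes "c \<noteq> 0" "\<And>\<theta>. \<theta> \<in> \<Omega> \<Longrightarrow> poly e' \<theta> = c * poly e \<theta>"
  shows "line_of f e' = line_of f e"
proof -
  have sub: "line_of f e' \<subseteq> line_of f e"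
    if "c \<noteq> 0" "\<forall>\<theta>\<in>\<Omega>. poly e' \<theta> = c * poly e \<theta>" for c e e'
  proof
    fix q assume "q \<in> line_of f e'"
    then obtain s t where "q \<in> Abar f" "\<forall>\<theta>\<in>\<Omega>. poly e' \<theta> * poly q \<theta> = s * \<theta> + t"
      unfolding line_of_conv_roots by blast
    then have "\<forall>\<theta>\<in>\<Omega>. poly e \<theta> * poly q \<theta> = (s / c) * \<theta> + t / c"
      using that by (auto simp: field_simps)
    then show "q \<in> line_of f e"
      unfolding line_of_conv_roots using \<open>q \<in> Abar f\<close> by blast
  qed
  show ?thesis
    using sub[of c e' e] sub[of "inverse c" e e'] assms by auto
qed

lemma mult_line_line_of:
  assumes m: "\<And>\<theta>. \<theta> \<in> \<Omega> \<Longrightarrow> poly m \<theta> * poly m \<theta> = 1"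
  shows "mult_line f m (line_of f e) = line_of f (m * e)"
proof (intro equalityI subsetI)
  fix r assume "r \<in> mult_line f m (line_of f e)"
  then obtain q s t where r: "r = (m * q) mod f"
    and st: "\<forall>\<theta>\<in>\<Omega>. poly e \<theta> * poly q \<theta> = s * \<theta> + t"
    unfolding mult_line_def line_of_conv_roots by blast
  have "poly (m * e) \<theta> * poly r \<theta> = s * \<theta> + t" if "\<theta> \<in> \<Omega>" for \<theta>
  proof -
    have "poly (m * e) \<theta> * poly r \<theta> = (poly m \<theta> * poly m \<theta>) * (poly e \<theta> * poly q \<theta>)"
      using that by (simp add: r poly_mod_at_root mult_ac)
    then show ?thesis
      using that st m by simp
  qed
  then show "r \<in> line_of f (m * e)"
    unfolding line_of_conv_roots r using mod_in_Abar by blast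
next
  fix r assume r: "r \<in> line_of f (m * e)"
  then obtain s t where st: "\<forall>\<theta>\<in>\<Omega>. poly (m * e) \<theta> * poly r \<theta> = s * \<theta> + t"
    unfolding line_of_conv_roots by blast
  have "\<forall>\<theta>\<in>\<Omega>. poly e \<theta> * poly ((m * r) mod f) \<theta> = s * \<theta> + t"
    using st by (simp add: poly_mod_at_root mult_ac)
  then have "(m * r) mod f \<in> line_of f e"
    unfolding line_of_conv_roots using mod_in_Abar by blast
  moreover have "(m * ((m * r) mod f)) mod f = r"
    using r m by (intro Abar_eqI mod_in_Abar) (auto simp: line_of_def poly_mod_at_root)
  ultimately show "r \<in> mult_line f m (line_of f e)"
    unfolding mult_line_def by force
qed

lemma line_of_mu_disjoint:
  assumes e: "\<forall>\<theta>\<in>\<Omega>. poly e \<theta> \<noteq> 0"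
    and D: "D \<subseteq> \<Omega>" "2 \<le> card D" "2 \<le> card (\<Omega> - D)"
  shows "\<not> lines_intersect (line_of f e) (line_of f (mu f D * e))"
proof
  assume "lines_intersect (line_of f e) (line_of f (mu f D * e))"
  then obtain q where q: "q \<noteq> 0" "q \<in> line_of f e" "q \<in> line_of f (mu f D * e)"
    unfolding lines_intersect_def by blast
  obtain s t where st: "\<forall>\<theta>\<in>\<Omega>. poly e \<theta> * poly q \<theta> = s * \<theta> + t"
    using q(2) unfolding line_of_conv_roots by blast
  obtain s' t' where st': "\<forall>\<theta>\<in>\<Omega>. poly (mu f D * e) \<theta> * poly q \<theta> = s' * \<theta> + t'"
    using q(3) unfolding line_of_conv_roots by blast
  obtain a1 a2 where a: "a1 \<in> \<Omega> - D" "a2 \<in> \<Omega> - D" "a1 \<noteq> a2"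
    using card_ge_2_obtain[OF D(3)] by blast
  obtain b1 b2 where b: "b1 \<in> D" "b2 \<in> D" "b1 \<noteq> b2"
    using card_ge_2_obtain[OF D(2)] by blast
  have "s * \<theta> + t = s' * \<theta> + t'" if "\<theta> \<in> \<Omega> - D" for \<theta>
    using that st st' by (auto simp: poly_mu_at_root)
  then have "s = s' \<and> t = t'"
    using affine_eq_at_two_points[OF a(3)] a by blast
  moreover have "(- s) * \<theta> + (- t) = s' * \<theta> + t'" if "\<theta> \<in> D" for \<theta>
    using that D(1) st st' by (force simp: poly_mu_at_root)
  then have "- s = s' \<and> - t = t'"
    using affine_eq_at_two_points[OF b(3)] b by blast
  ultimately have "s = 0" "t = 0"
    using neg_eq_self_iff by auto
  then have "q = 0"
    using e st q(2) by (intro Abar_eqI) (auto simp: line_of_def Abar_def)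
  with q(1) show False ..
qed

lemma line_of_mu_singleton_meet:
  assumes e: "\<forall>\<theta>\<in>\<Omega>. poly e \<theta> \<noteq> 0" and w: "w \<in> \<Omega>"
  shows "lines_intersect (line_of f e) (line_of f (mu f {w} * e))"
proof -
  obtain q where q: "q \<in> Abar f" "\<forall>\<theta>\<in>\<Omega>. poly q \<theta> = (\<theta> - w) / poly e \<theta>"
    using Abar_interpolation[of "\<lambda>\<theta>. (\<theta> - w) / poly e \<theta>"] by blast
  have "\<forall>\<theta>\<in>\<Omega>. poly e \<theta> * poly q \<theta> = 1 * \<theta> + - w"
    "\<forall>\<theta>\<in>\<Omega>. poly (mu f {w} * e) \<theta> * poly q \<theta> = 1 * \<theta> + - w"
    using q e by (auto simp: poly_mu_at_root)
  then have "q \<in> line_of f e" "q \<in> line_of f (mu f {w} * e)"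
    unfolding line_of_conv_roots using q(1) by blast+
  moreover have "2 \<le> card \<Omega>"
    using three_le_card_roots by simp
  then obtain \<theta> where "\<theta> \<in> \<Omega>" "\<theta> \<noteq> w"
    by (metis card_ge_2_obtain)
  then have "q \<noteq> 0"
    using q e by force
  ultimately show ?thesis
    unfolding lines_intersect_def by blast
qed

lemma line_of_mu_eq_imp:
  assumes e: "\<forall>\<theta>\<in>\<Omega>. poly e \<theta> \<noteq> 0" and D: "D \<subseteq> \<Omega>"
    and eq: "line_of f (mu f D * e) = line_of f e"
  shows "D = {} \<or> D = \<Omega>"
proof -
  obtain q where q: "q \<in> Abar f" "\<forall>\<theta>\<in>\<Omega>. poly q \<theta> = 1 / poly e \<theta>"
    using Abar_interpolation[of "\<lambda>\<theta>. 1 / poly e \<theta>"] by blast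
  have "\<forall>\<theta>\<in>\<Omega>. poly e \<theta> * poly q \<theta> = 0 * \<theta> + 1"
    using q e by simp
  then have "q \<in> line_of f e"
    unfolding line_of_conv_roots using q(1) by blast
  then have "q \<in> line_of f (mu f D * e)"
    using eq by simp
  then obtain s t where "\<forall>\<theta>\<in>\<Omega>. poly (mu f D * e) \<theta> * poly q \<theta> = s * \<theta> + t"
    unfolding line_of_conv_roots by blast
  then have affine: "poly (mu f D) \<theta> = s * \<theta> + t" if "\<theta> \<in> \<Omega>" for \<theta>
    using that q e by simp
  have "s = 0"
  proof (rule ccontr)
    assume "s \<noteq> 0"
    \<comment> \<open>then \<theta> \<mapsto> s \<theta> + t would inject the (at least three) roots into {-1, 1}\<close>
    then have "inj_on (\<lambda>\<theta>. s * \<theta> + t) \<Omega>"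
      by (auto simp: inj_on_def)
    moreover have "s * \<theta> + t \<in> {-1, 1}" if "\<theta> \<in> \<Omega>" for \<theta>
      using affine[OF that] poly_mu_at_root[OF that, of D] by (auto split: if_splits)
    ultimately have "card \<Omega> \<le> card {-1, 1 :: 'a}"
      by (intro card_inj_on_le) auto
    also have "\<dots> \<le> 2"
      by (simp add: card_insert_if)
    finally show False
      using three_le_card_roots by simp
  qed
  then have const: "poly (mu f D) \<theta> = t" if "\<theta> \<in> \<Omega>" for \<theta>
    using affine[OF that] by simp
  show ?thesis
  proof (rule ccontr)
    assume "\<not> (D = {} \<or> D = \<Omega>)"
    then obtain d d' where d: "d \<in> D" "d' \<in> \<Omega> - D"
      using D by blast
    then have "poly (mu f D) d = -1" "poly (mu f D) d' = 1"
      using D by (auto simp: poly_mu_at_root)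
    then have "- 1 = (1::'a)"
      using const d D by auto
    then show False
      using neg_eq_self_iff[of 1] by simp
  qed
qed

end

locale sqrt_lines = Abar_lines f for f :: "'a::field poly" +
  fixes \<epsilon> \<delta> :: "'a poly"
  assumes sqrt_squared: "(\<epsilon> * \<epsilon>) mod f = \<delta> mod f"
    and delta_unit: "Abar_unit f \<delta>"
begin

lemma sqrt_nonzero_at_root:
  assumes "\<theta> \<in> \<Omega>"
  shows "poly \<epsilon> \<theta> \<noteq> 0"
proof -
  have "poly \<epsilon> \<theta> * poly \<epsilon> \<theta> = poly \<delta> \<theta>"
    using assms sqrt_squared mod_eq_iff_eq_on_roots by fastforce
  then show ?thesis
    using Abar_unit_nonzero_at_root[OF delta_unit assms] by auto
qed

text \<open>line_mu K is \<mu>_K L_\<epsilon>; as \<mu>_K is its own inverse, this is L_(\<mu>_K \<epsilon>).\<close>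

definition line_mu :: "'a set \<Rightarrow> 'a poly set" where
  "line_mu K = line_of f (mu f K * \<epsilon>)"

lemma mu_sqrt_nonzero_at_root: "\<forall>\<theta>\<in>\<Omega>. poly (mu f K * \<epsilon>) \<theta> \<noteq> 0"
  using sqrt_nonzero_at_root by (simp add: poly_mu_at_root)

lemma line_mu_empty: "line_mu {} = line_of f \<epsilon>"
  unfolding line_mu_def by (rule line_of_scale[of 1]) (auto simp: poly_mu_at_root)

lemma line_mu_compl: "line_mu (\<Omega> - K) = line_mu K"
  unfolding line_mu_def by (rule line_of_scale[of "-1"]) (auto simp: poly_mu_at_root)

lemma line_mu_twist: "line_mu K' = line_of f (mu f (sym_diff K K') * (mu f K * \<epsilon>))"
  unfolding line_mu_def by (rule line_of_scale[of 1]) (auto simp: poly_mu_at_root)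

lemma mult_line_mu_line_mu: "mult_line f (mu f J) (line_mu K) = line_mu (sym_diff K J)"
proof -
  have "mult_line f (mu f J) (line_mu K) = line_of f (mu f J * (mu f K * \<epsilon>))"
    unfolding line_mu_def by (rule mult_line_line_of) (simp add: poly_mu_at_root)
  also have "\<dots> = line_mu (sym_diff K J)"
    unfolding line_mu_def by (rule line_of_scale[of 1]) (auto simp: poly_mu_at_root)
  finally show ?thesis .
qed

lemma Lambda_eq_line_mu: "Lambda f \<delta> = line_mu ` Pow \<Omega>"
proof (intro equalityI subsetI)
  fix N assume "N \<in> Lambda f \<delta>"
  then obtain e where e: "N = line_of f e" "(e * e) mod f = \<delta> mod f"
    unfolding Lambda_def by blast
  define K where "K = {\<theta>\<in>\<Omega>. poly e \<theta> = - poly \<epsilon> \<theta>}"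
  \<comment> \<open>two square roots of the same unit agree up to sign at every root\<close>
  have "poly e \<theta> * poly e \<theta> = poly \<epsilon> \<theta> * poly \<epsilon> \<theta>" if "\<theta> \<in> \<Omega>" for \<theta>
    using that e(2) sqrt_squared mod_eq_iff_eq_on_roots by fastforce
  then have "poly e \<theta> = 1 * poly (mu f K * \<epsilon>) \<theta>" if "\<theta> \<in> \<Omega>" for \<theta>
    using that by (auto simp: K_def poly_mu_at_root square_eq_iff)
  then have "N = line_mu K"
    unfolding e(1) line_mu_def by (intro line_of_scale[of 1]) auto
  then show "N \<in> line_mu ` Pow \<Omega>"
    unfolding K_def by blast
next
  fix N assume "N \<in> line_mu ` Pow \<Omega>"
  then obtain K where N: "N = line_mu K"
    by blast
  define e where "e = (mu f K * \<epsilon>) mod f"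
  have "line_of f e = N"
    unfolding N line_mu_def e_def by (rule line_of_scale[of 1]) (auto simp: poly_mod_at_root)
  moreover have "(e * e) mod f = \<delta> mod f"
  proof -
    have "poly (e * e) \<theta> = poly (\<epsilon> * \<epsilon>) \<theta>" if "\<theta> \<in> \<Omega>" for \<theta>
      using that by (simp add: e_def poly_mod_at_root poly_mu_at_root)
    then show ?thesis
      using sqrt_squared mod_eq_iff_eq_on_roots by auto
  qed
  ultimately show "N \<in> Lambda f \<delta>"
    unfolding Lambda_def e_def using mod_in_Abar by blast
qed

lemma line_mu_eq_iff:
  assumes "K \<subseteq> \<Omega>" "K' \<subseteq> \<Omega>"
  shows "line_mu K = line_mu K' \<longleftrightarrow> K' = K \<or> K' = \<Omega> - K"
proof
  assume "line_mu K = line_mu K'"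
  then have "line_of f (mu f (sym_diff K K') * (mu f K * \<epsilon>)) = line_of f (mu f K * \<epsilon>)"
    unfolding line_mu_twist[of K' K] by (simp add: line_mu_def)
  then have "sym_diff K K' = {} \<or> sym_diff K K' = \<Omega>"
    using assms by (intro line_of_mu_eq_imp[OF mu_sqrt_nonzero_at_root]) auto
  then show "K' = K \<or> K' = \<Omega> - K"
    using assms by blast
next
  assume "K' = K \<or> K' = \<Omega> - K"
  then show "line_mu K = line_mu K'"
    using line_mu_compl by auto
qed

lemma line_mu_meet_if_adjacent:
  assumes "sym_diff K K' = {w}" "w \<in> \<Omega>"
  shows "lines_intersect (line_mu K) (line_mu K')"
  using line_of_mu_singleton_meet[OF mu_sqrt_nonzero_at_root assms(2), of K] assms(1)
  unfolding line_mu_twist[of K' K] by (simp add: line_mu_def)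

lemma line_mu_intersect_iff:
  assumes K: "K \<subseteq> \<Omega>" "K' \<subseteq> \<Omega>"
    and D: "D = sym_diff K K'" "D \<noteq> {}" "D \<noteq> \<Omega>"
  shows "lines_intersect (line_mu K) (line_mu K') \<longleftrightarrow> card D = 1 \<or> card (\<Omega> - D) = 1"
proof -
  have "D \<subseteq> \<Omega>"
    using D(1) K by blast
  then have "0 < card D" "0 < card (\<Omega> - D)"
    using D(2,3) finite_roots finite_subset by (auto simp: card_gt_0_iff)
  then have "card D = 1 \<or> card (\<Omega> - D) = 1 \<or> 2 \<le> card D \<and> 2 \<le> card (\<Omega> - D)"
    by arith
  then consider "card D = 1" | "card (\<Omega> - D) = 1" | "2 \<le> card D" "2 \<le> card (\<Omega> - D)"
    by blast
  then show ?thesis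
  proof cases
    case 1
    then obtain w where "D = {w}"
      by (rule card_1_singletonE)
    then show ?thesis
      using line_mu_meet_if_adjacent[of K K' w] 1 D(1) \<open>D \<subseteq> \<Omega>\<close> by simp
  next
    case 2
    then obtain w where w: "\<Omega> - D = {w}"
      by (rule card_1_singletonE)
    then have "sym_diff K (\<Omega> - K') = {w}"
      using D(1) K by blast
    then show ?thesis
      using line_mu_meet_if_adjacent[of K "\<Omega> - K'" w] w 2 line_mu_compl[of K'] by auto
  next
    case 3
    then show ?thesis
      using line_of_mu_disjoint[OF mu_sqrt_nonzero_at_root \<open>D \<subseteq> \<Omega>\<close> 3] D(1)
      unfolding line_mu_twist[of K' K] by (simp add: line_mu_def)
  qed
qed

lemma line_mu_singletons_distinct:
  assumes "a \<in> \<Omega>" "b \<in> \<Omega>" "a \<noteq> b"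
  shows "line_mu {a} \<noteq> line_mu {b}"
proof
  assume "line_mu {a} = line_mu {b}"
  then have "{b} = \<Omega> - {a}"
    using assms line_mu_eq_iff[of "{a}" "{b}"] by auto
  then have "\<Omega> = {a, b}"
    using assms by blast
  then show False
    using three_le_card_roots assms(3) by simp
qed

lemma same_parity_line_mu_empty_iff:
  "same_parity f (line_mu {}) N \<longleftrightarrow> (\<exists>I\<subseteq>\<Omega>. N = line_mu I \<and> even (card I))"
  unfolding same_parity_def using mult_line_mu_line_mu[of _ "{}"] by auto

lemma odd_line_mu_not_same_parity:
  assumes "even (card \<Omega>)" "J \<subseteq> \<Omega>" "odd (card J)"
  shows "\<not> same_parity f (line_mu {}) (line_mu J)"
proof
  assume "same_parity f (line_mu {}) (line_mu J)"
  then obtain I where I: "I \<subseteq> \<Omega>" "line_mu J = line_mu I" "even (card I)"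
    unfolding same_parity_line_mu_empty_iff by blast
  then have "I = J \<or> I = \<Omega> - J"
    using line_mu_eq_iff[OF assms(2) I(1)] by simp
  moreover have "card (\<Omega> - J) = card \<Omega> - card J" "card J \<le> card \<Omega>"
    using assms(2) finite_roots by (auto simp: card_Diff_subset finite_subset card_mono)
  ultimately show False
    using I(3) assms(1,3) by auto
qed

lemma Phi_orbit_line_mu_empty:
  assumes "a \<noteq> b"
  shows "Phi_orbit f a b (line_mu {}) = {line_mu {}, line_mu {a}, line_mu {b}, line_mu {a, b}}"
proof -
  define S :: "nat \<Rightarrow> nat \<Rightarrow> 'a set" where
    "S i j = (if odd i then {a} else {}) \<union> (if odd j then {b} else {})" for i j
  have "mult_line f (mu f {a} ^ i * mu f {b} ^ j) (line_mu {}) = line_mu (S i j)" for i j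
  proof -
    have "mult_line f (mu f {a} ^ i * mu f {b} ^ j) (line_mu {}) = mult_line f (mu f (S i j)) (line_mu {})"
      using assms by (intro mult_line_cong) (auto simp: S_def poly_mu_at_root poly_power)
    then show ?thesis
      using mult_line_mu_line_mu[of "S i j" "{}"] by simp
  qed
  then have orbit: "Phi_orbit f a b (line_mu {}) = {line_mu (S i j) | i j. True}"
    unfolding Phi_orbit_def by simp
  have "line_mu (S i j) \<in> Phi_orbit f a b (line_mu {})" for i j
    unfolding orbit by blast
  from this[of 0 0] this[of 1 0] this[of 0 1] this[of 1 1]
  have "{line_mu {}, line_mu {a}, line_mu {b}, line_mu {a, b}} \<subseteq> Phi_orbit f a b (line_mu {})"
    by (simp add: S_def insert_commute)
  moreover have "Phi_orbit f a b (line_mu {}) \<subseteq> {line_mu {}, line_mu {a}, line_mu {b}, line_mu {a, b}}"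
    unfolding orbit by (auto simp: S_def)
  ultimately show ?thesis
    by blast
qed

end

locale sextic_sqrt_lines = sqrt_lines +
  assumes six_roots: "card (roots_of f) = 6"
begin

lemma same_parity_line_mu_pair:
  assumes "same_parity f (line_mu {}) L'" "L' \<noteq> line_mu {}"
  obtains a b where "a \<in> \<Omega>" "b \<in> \<Omega>" "a \<noteq> b" "L' = line_mu {a, b}"
proof -
  obtain I where I: "I \<subseteq> \<Omega>" "L' = line_mu I" "even (card I)"
    using assms(1) same_parity_line_mu_empty_iff by blast
  then have "I \<noteq> {}" "I \<noteq> \<Omega>"
    using assms(2) line_mu_compl[of "{}"] by auto
  moreover have "finite I"
    using I(1) finite_roots finite_subset by blast
  ultimately have "card I \<noteq> 0" "card I \<noteq> 6" "card I \<le> 6" "card (\<Omega> - I) = 6 - card I"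
    using I(1) card_subset_eq[OF finite_roots I(1)] card_mono[OF finite_roots I(1)]
      card_Diff_subset[of I \<Omega>] six_roots by auto
  then have "card I = 2 \<or> card (\<Omega> - I) = 2"
    using I(3) by presburger
  moreover have "L' = line_mu (\<Omega> - I)"
    using I(2) line_mu_compl by simp
  ultimately obtain J where "card J = 2" "J \<subseteq> \<Omega>" "L' = line_mu J"
    using I(1,2) by blast
  then show ?thesis
    using that by (auto simp: card_2_iff)
qed

lemma line_mu_pair_disjoint:
  assumes "a \<in> \<Omega>" "b \<in> \<Omega>" "a \<noteq> b"
  shows "\<not> lines_intersect (line_mu {}) (line_mu {a, b})"
proof -
  have "card {a, b} \<noteq> card \<Omega>"
    using assms(3) six_roots by simp
  then have "{a, b} \<noteq> \<Omega>"
    by metis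
  moreover have "card (\<Omega> - {a, b}) = 4"
    using assms six_roots by (simp add: card_Diff_subset)
  ultimately show ?thesis
    using assms line_mu_intersect_iff[of "{}" "{a, b}" "{a, b}"] by auto
qed

lemma opposite_line_meeting_line_mu_empty:
  assumes "N \<in> Lambda f \<delta>" "opposite_parity f (line_mu {}) N" "lines_intersect N (line_mu {})"
  obtains w where "w \<in> \<Omega>" "N = line_mu {w}"
proof -
  obtain J where J: "J \<subseteq> \<Omega>" "N = line_mu J"
    using assms(1) Lambda_eq_line_mu by blast
  have "odd (card J)"
    using assms(2) J same_parity_line_mu_empty_iff unfolding opposite_parity_def by blast
  then have "J \<noteq> {}" "J \<noteq> \<Omega>"
    using six_roots by auto
  then have "card J = 1 \<or> card (\<Omega> - J) = 1"
    using assms(3) J line_mu_intersect_iff[of J "{}" J] by simp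
  moreover have "N = line_mu (\<Omega> - J)"
    using J(2) line_mu_compl by simp
  ultimately show ?thesis
    using J that by (metis Diff_subset card_1_singletonE insert_subset)
qed

lemma line_mu_singleton_meets_pair_iff:
  assumes "w \<in> \<Omega>" "a \<in> \<Omega>" "b \<in> \<Omega>" "a \<noteq> b"
  shows "lines_intersect (line_mu {w}) (line_mu {a, b}) \<longleftrightarrow> w = a \<or> w = b"
proof
  assume meet: "lines_intersect (line_mu {w}) (line_mu {a, b})"
  show "w = a \<or> w = b"
  proof (rule ccontr)
    assume "\<not> (w = a \<or> w = b)"
    then have D: "sym_diff {w} {a, b} = {w, a, b}" and card_D: "card {w, a, b} = 3"
      using assms(4) by auto
    have "card (\<Omega> - {w, a, b}) = 3" "{w, a, b} \<noteq> \<Omega>"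
      using card_D assms six_roots by (auto simp: card_Diff_subset)
    then show False
      using meet line_mu_intersect_iff[OF _ _ D[symmetric]] assms card_D by simp
  qed
next
  assume "w = a \<or> w = b"
  then show "lines_intersect (line_mu {w}) (line_mu {a, b})"
  proof
    assume "w = a"
    then have "sym_diff {w} {a, b} = {b}"
      using assms(4) by auto
    then show ?thesis
      using line_mu_meet_if_adjacent assms(3) by blast
  next
    assume "w = b"
    then have "sym_diff {w} {a, b} = {a}"
      using assms(4) by auto
    then show ?thesis
      using line_mu_meet_if_adjacent assms(2) by blast
  qed
qed

lemma lines_meeting_line_mu_pair:
  assumes ab: "a \<in> \<Omega>" "b \<in> \<Omega>" "a \<noteq> b"
  shows "{N \<in> Lambda f \<delta>. opposite_parity f (line_mu {}) N \<and>
            lines_intersect N (line_mu {}) \<and> lines_intersect N (line_mu {a, b})}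
         = {line_mu {a}, line_mu {b}}"
proof (intro equalityI subsetI)
  fix N
  assume "N \<in> {N \<in> Lambda f \<delta>. opposite_parity f (line_mu {}) N \<and>
            lines_intersect N (line_mu {}) \<and> lines_intersect N (line_mu {a, b})}"
  then have N: "N \<in> Lambda f \<delta>" "opposite_parity f (line_mu {}) N"
      "lines_intersect N (line_mu {})" "lines_intersect N (line_mu {a, b})"
    by auto
  obtain w where "w \<in> \<Omega>" "N = line_mu {w}"
    by (rule opposite_line_meeting_line_mu_empty[OF N(1-3)])
  then show "N \<in> {line_mu {a}, line_mu {b}}"
    using N(4) line_mu_singleton_meets_pair_iff ab by auto
next
  fix N assume "N \<in> {line_mu {a}, line_mu {b}}"
  then obtain c where c: "c = a \<or> c = b" "N = line_mu {c}"
    by blast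
  then have "c \<in> \<Omega>"
    using ab by auto
  have "N \<in> Lambda f \<delta>"
    using c(2) \<open>c \<in> \<Omega>\<close> Lambda_eq_line_mu by blast
  moreover have "opposite_parity f (line_mu {}) N"
    unfolding opposite_parity_def c(2)
    using odd_line_mu_not_same_parity \<open>c \<in> \<Omega>\<close> six_roots by simp
  moreover have "lines_intersect N (line_mu {})"
    using line_mu_meet_if_adjacent[of "{c}" "{}" c] c(2) \<open>c \<in> \<Omega>\<close> by simp
  moreover have "lines_intersect N (line_mu {a, b})"
    using line_mu_singleton_meets_pair_iff \<open>c \<in> \<Omega>\<close> ab c by simp
  ultimately show "N \<in> {N \<in> Lambda f \<delta>. opposite_parity f (line_mu {}) N \<and>
            lines_intersect N (line_mu {}) \<and> lines_intersect N (line_mu {a, b})}"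
    by blast
qed

end

theorem lemma2p15:
  fixes k :: "'a::alg_closed_field set" and f \<delta> :: "'a poly" and L L' :: "'a poly set"
  assumes "subfield k"
    and "(2::'a) \<noteq> 0"
    and "\<forall>i. coeff f i \<in> k"
    and "degree f = 6"
    and "separable_poly f"
    and "\<delta> \<in> Abar f" and "Abar_unit f \<delta>"
    and "L \<in> Lambda f \<delta>" and "L' \<in> Lambda f \<delta>" and "L \<noteq> L'"
    and "same_parity f L L'"
  shows "\<not> lines_intersect L L' \<and>
    (\<exists>M M'. M \<noteq> M' \<and>
       {N \<in> Lambda f \<delta>. opposite_parity f L N \<and> lines_intersect N L \<and> lines_intersect N L'}
         = {M, M'} \<and>
       (\<exists>\<omega>\<in>roots_of f. \<exists>\<psi>\<in>roots_of f. Phi_orbit f \<omega> \<psi> L = {L, L', M, M'}))"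
proof -
  have "f \<noteq> 0"
    using assms(4) by auto
  then have six: "card (roots_of f) = 6"
    using card_roots_of_separable[OF _ assms(5)] assms(4) by simp
  obtain \<epsilon> where \<epsilon>: "L = line_of f \<epsilon>" "\<epsilon> \<in> Abar f" "(\<epsilon> * \<epsilon>) mod f = \<delta> mod f"
    using assms(8) unfolding Lambda_def by blast
  interpret sextic_sqrt_lines f \<epsilon> \<delta>
    using \<open>f \<noteq> 0\<close> six \<epsilon> assms(2,4,7) by unfold_locales auto
  have L: "L = line_mu {}"
    using \<epsilon>(1) line_mu_empty by simp
  obtain a b where ab: "a \<in> \<Omega>" "b \<in> \<Omega>" "a \<noteq> b" and L': "L' = line_mu {a, b}"
    using same_parity_line_mu_pair assms(10,11) L by metis
  show ?thesis
    unfolding L L'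
  proof (intro conjI exI bexI)
    show "\<not> lines_intersect (line_mu {}) (line_mu {a, b})"
      using line_mu_pair_disjoint ab .
    show "line_mu {a} \<noteq> line_mu {b}"
      using line_mu_singletons_distinct ab .
    show "{N \<in> Lambda f \<delta>. opposite_parity f (line_mu {}) N \<and> lines_intersect N (line_mu {})
            \<and> lines_intersect N (line_mu {a, b})} = {line_mu {a}, line_mu {b}}"
      using lines_meeting_line_mu_pair ab .
    show "Phi_orbit f a b (line_mu {}) = {line_mu {}, line_mu {a, b}, line_mu {a}, line_mu {b}}"
      using Phi_orbit_line_mu_empty[OF ab(3)] by auto
  qed (use ab in auto)
qed

end
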